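(* Let $R$ and $S$ be commutative rings with identity, $f:R\to S$ a ring homomorphism, and $J$ a nonzero proper ideal of $S$. (1) If $J\subseteq\operatorname{Nil}(S)$, then $R\bowtie^f J$ is compactly packed if and only if $R$ is compactly packed. (2) For any $R$-module $M$, the trivial extension $R\ltimes M$ is compactly packed if and only if $R$ is compactly packed.
   Context: $R\bowtie^f J:=\{(r,f(r)+j)\mid r\in R,\ j\in J\}$, a subring of $R\times S$. $\operatorname{Nil}(S)$ is the nilradical of $S$. The trivial extension $R\ltimes M$ is the ring $R\oplus M$ with multiplication $(r,m)(r',m')=(rr',rm'+r'm)$. A commutative ring $A$ is compactly packed if whenever an ideal $I$ of $A$ is contained in the union of a family $\{\mathfrak{p}_i\}_i$ of prime ideals of $A$, then $I\subseteq\mathfrak{p}_i$ for some $i$. *)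

theory Defs
  imports "HOL-Algebra.Module" "HOL-Algebra.Ideal"
begin

definition compactly_packed :: "('a, 'm) ring_scheme \<Rightarrow> bool" where
  "compactly_packed A \<longleftrightarrow>
     (\<forall>I P. ideal I A \<and> (\<forall>p\<in>P. primeideal p A) \<and> I \<subseteq> \<Union>P
        \<longrightarrow> (\<exists>p\<in>P. I \<subseteq> p))"

definition nilradical :: "('a, 'm) ring_scheme \<Rightarrow> 'a set" where
  "nilradical S = {x \<in> carrier S. \<exists>n::nat. x [^]\<^bsub>S\<^esub> n = \<zero>\<^bsub>S\<^esub>}"

definition amalgamation ::
  "('a, 'm) ring_scheme \<Rightarrow> ('b, 'n) ring_scheme \<Rightarrow> ('a \<Rightarrow> 'b) \<Rightarrow> 'b set \<Rightarrow> ('a \<times> 'b) ring" where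
  "amalgamation R S f J =
    \<lparr> carrier = {(r, f r \<oplus>\<^bsub>S\<^esub> j) | r j. r \<in> carrier R \<and> j \<in> J},
      monoid.mult = (\<lambda>(r, s) (r', s'). (r \<otimes>\<^bsub>R\<^esub> r', s \<otimes>\<^bsub>S\<^esub> s')),
      one = (\<one>\<^bsub>R\<^esub>, \<one>\<^bsub>S\<^esub>),
      zero = (\<zero>\<^bsub>R\<^esub>, \<zero>\<^bsub>S\<^esub>),
      add = (\<lambda>(r, s) (r', s'). (r \<oplus>\<^bsub>R\<^esub> r', s \<oplus>\<^bsub>S\<^esub> s')) \<rparr>"

definition trivial_extension ::
  "('a, 'm) ring_scheme \<Rightarrow> ('a, 'b, 'n) module_scheme \<Rightarrow> ('a \<times> 'b) ring" where
  "trivial_extension R M =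
    \<lparr> carrier = carrier R \<times> carrier M,
      monoid.mult = (\<lambda>(r, m) (r', m'). (r \<otimes>\<^bsub>R\<^esub> r', (r \<odot>\<^bsub>M\<^esub> m') \<oplus>\<^bsub>M\<^esub> (r' \<odot>\<^bsub>M\<^esub> m))),
      one = (\<one>\<^bsub>R\<^esub>, \<zero>\<^bsub>M\<^esub>),
      zero = (\<zero>\<^bsub>R\<^esub>, \<zero>\<^bsub>M\<^esub>),
      add = (\<lambda>(r, m) (r', m'). (r \<oplus>\<^bsub>R\<^esub> r', m \<oplus>\<^bsub>M\<^esub> m')) \<rparr>"

end

theory Submission
  imports "HOL-Algebra.Chinese_Remainder" "HOL-Algebra.Subrings" Defs
begin

(* In both constructions the first projection is a surjective ring homomorphism onto R whose
   kernel is nil: it is {0} x J in the amalgamation, and 0 x M, whose elements square to zero,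
   in the trivial extension. Compact packedness descends along any surjection h: pull the ideal
   and the primes back. It also lifts along a surjection with nil kernel: every prime p contains
   the kernel, so h(p) is prime and h^-1(h(p)) = p, and one pushes the ideal and the primes
   forward. *)

lemma compactly_packedI:
  assumes "\<And>I P. ideal I A \<Longrightarrow> (\<And>p. p \<in> P \<Longrightarrow> primeideal p A) \<Longrightarrow> I \<subseteq> \<Union> P
             \<Longrightarrow> \<exists>p\<in>P. I \<subseteq> p"
  shows "compactly_packed A"
  using assms unfolding compactly_packed_def by blast

lemma compactly_packedE:
  assumes "compactly_packed A" and "ideal I A" and "\<And>p. p \<in> P \<Longrightarrow> primeideal p A"
    and "I \<subseteq> \<Union> P"
  obtains p where "p \<in> P" and "I \<subseteq> p"
  using assms unfolding compactly_packed_def by blast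

lemma (in primeideal) nat_pow_mem_imp_mem:
  assumes "a \<in> carrier R" and "a [^] (n::nat) \<in> I"
  shows "a \<in> I"
  using assms(2)
proof (induction n)
  case 0
  then show ?case using I_notcarr one_imp_carrier by simp
next
  case (Suc n)
  then show ?case using I_prime[of "a [^] n" a] assms(1) by auto
qed

lemma (in primeideal) nilradical_subset: "nilradical R \<subseteq> I"
proof
  fix a assume "a \<in> nilradical R"
  then obtain n :: nat where "a \<in> carrier R" and "a [^] n = \<zero>"
    unfolding nilradical_def by blast
  then show "a \<in> I" using nat_pow_mem_imp_mem[of a n] by simp
qed

lemma (in ring_hom_ring) surj_img_is_ideal:
  assumes surj: "h ` carrier R = carrier S" and "ideal I R"
  shows "ideal (h ` I) S"
proof -
  interpret I: ideal I R by fact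
  show ?thesis
  proof (rule idealI)
    show "subgroup (h ` I) (add_monoid S)"
      by (rule img_is_add_subgroup[OF I.a_subgroup])
  next
    fix a x assume "a \<in> h ` I" and "x \<in> carrier S"
    then obtain i r where "i \<in> I" "r \<in> carrier R" "a = h i" "x = h r"
      using surj by blast
    then show "x \<otimes>\<^bsub>S\<^esub> a \<in> h ` I" and "a \<otimes>\<^bsub>S\<^esub> x \<in> h ` I"
      by (metis I.I_l_closed I.Icarr hom_mult image_eqI,
          metis I.I_r_closed I.Icarr hom_mult image_eqI)
  qed (rule S.ring_axioms)
qed

lemma (in ring_hom_ring) mem_img_primeideal_iff:
  assumes nil: "a_kernel R S h \<subseteq> nilradical R" and "primeideal P R" and a: "a \<in> carrier R"
  shows "h a \<in> h ` P \<longleftrightarrow> a \<in> P"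
proof
  interpret P: primeideal P R by fact
  assume "h a \<in> h ` P"
  then obtain b where b: "b \<in> P" "h a = h b" by blast
  then have b_carr: "b \<in> carrier R" using P.Icarr by blast
  have "h (a \<oplus> \<ominus> b) = h a \<oplus>\<^bsub>S\<^esub> \<ominus>\<^bsub>S\<^esub> h b"
    using a b_carr by simp
  also have "\<dots> = \<zero>\<^bsub>S\<^esub>"
    unfolding b(2) using b_carr by (simp add: S.r_neg)
  finally have "h (a \<oplus> \<ominus> b) = \<zero>\<^bsub>S\<^esub>" .
  then have "a \<oplus> \<ominus> b \<in> a_kernel R S h"
    using a b_carr unfolding a_kernel_def' by blast
  then have "a \<oplus> \<ominus> b \<in> P"
    using nil P.nilradical_subset by blast
  then have "(a \<oplus> \<ominus> b) \<oplus> b \<in> P" using b by simp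
  moreover have "(a \<oplus> \<ominus> b) \<oplus> b = a"
    using a b_carr by (simp add: R.a_assoc R.l_neg)
  ultimately show "a \<in> P" by simp
next
  assume "a \<in> P"
  then show "h a \<in> h ` P" by (rule imageI)
qed

lemma (in ring_hom_ring) surj_img_is_primeideal:
  assumes "cring S" and surj: "h ` carrier R = carrier S"
    and nil: "a_kernel R S h \<subseteq> nilradical R" and P: "primeideal P R"
  shows "primeideal (h ` P) S"
proof -
  interpret P: primeideal P R by fact
  have mem_iff: "\<And>a. a \<in> carrier R \<Longrightarrow> h a \<in> h ` P \<longleftrightarrow> a \<in> P"
    using mem_img_primeideal_iff[OF nil P] .
  show ?thesis
  proof (rule primeidealI)
    show "ideal (h ` P) S" using surj_img_is_ideal[OF surj P.is_ideal] .
    show "cring S" by fact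
    show "carrier S \<noteq> h ` P"
      using mem_iff[of \<one>] P.I_notcarr P.one_imp_carrier by auto
  next
    fix a b assume "a \<in> carrier S" "b \<in> carrier S" "a \<otimes>\<^bsub>S\<^esub> b \<in> h ` P"
    then obtain x y where "x \<in> carrier R" "y \<in> carrier R" "a = h x" "b = h y"
      using surj by blast
    moreover from this have "x \<otimes> y \<in> P"
      using \<open>a \<otimes>\<^bsub>S\<^esub> b \<in> h ` P\<close> mem_iff[of "x \<otimes> y"] by simp
    ultimately show "a \<in> h ` P \<or> b \<in> h ` P"
      using P.I_prime by blast
  qed
qed

lemma (in ring_hom_ring) compactly_packed_surj_img:
  assumes "cring R" and surj: "h ` carrier R = carrier S" and "compactly_packed R"
  shows "compactly_packed S"
proof (rule compactly_packedI)
  fix I Q assume I: "ideal I S" and Q: "\<And>q. q \<in> Q \<Longrightarrow> primeideal q S" and "I \<subseteq> \<Union> Q"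
  let ?vimage = "\<lambda>q. {r \<in> carrier R. h r \<in> q}"
  obtain p where "p \<in> ?vimage ` Q" "?vimage I \<subseteq> p"
  proof (rule compactly_packedE[OF \<open>compactly_packed R\<close> ideal_vimage[OF I]])
    show "primeideal p R" if "p \<in> ?vimage ` Q" for p
      using that primeideal_vimage[OF \<open>cring R\<close> Q] by blast
    show "?vimage I \<subseteq> \<Union> (?vimage ` Q)" using \<open>I \<subseteq> \<Union> Q\<close> by blast
  qed
  then obtain q where "q \<in> Q" "?vimage I \<subseteq> ?vimage q" by blast
  moreover have "I \<subseteq> h ` ?vimage I"
  proof
    fix i assume "i \<in> I"
    then obtain r where "r \<in> carrier R" "i = h r"
      using surj ideal.Icarr[OF I] by (metis imageE)
    with \<open>i \<in> I\<close> show "i \<in> h ` ?vimage I" by blast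
  qed
  ultimately show "\<exists>q\<in>Q. I \<subseteq> q" by blast
qed

lemma (in ring_hom_ring) compactly_packed_of_surj_nil_kernel:
  assumes "cring S" and surj: "h ` carrier R = carrier S"
    and nil: "a_kernel R S h \<subseteq> nilradical R" and "compactly_packed S"
  shows "compactly_packed R"
proof (rule compactly_packedI)
  fix I P assume I: "ideal I R" and P: "\<And>p. p \<in> P \<Longrightarrow> primeideal p R" and "I \<subseteq> \<Union> P"
  obtain q where "q \<in> (`) h ` P" "h ` I \<subseteq> q"
  proof (rule compactly_packedE[OF \<open>compactly_packed S\<close> surj_img_is_ideal[OF surj I]])
    show "primeideal q S" if "q \<in> (`) h ` P" for q
      using that surj_img_is_primeideal[OF \<open>cring S\<close> surj nil P] by blast
    show "h ` I \<subseteq> \<Union> ((`) h ` P)" using \<open>I \<subseteq> \<Union> P\<close> by blast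
  qed
  then obtain p where p: "p \<in> P" "h ` I \<subseteq> h ` p" by blast
  then have "I \<subseteq> p"
    using mem_img_primeideal_iff[OF nil P] ideal.Icarr[OF I] by blast
  with p show "\<exists>p\<in>P. I \<subseteq> p" by blast
qed

lemma compactly_packed_iff_surj_nil_kernel:
  assumes "cring A" and "cring B" and "h \<in> ring_hom A B"
    and "h ` carrier A = carrier B" and "a_kernel A B h \<subseteq> nilradical A"
  shows "compactly_packed A \<longleftrightarrow> compactly_packed B"
proof -
  interpret ring_hom_ring A B h
    using assms(1-3) by (simp add: ring_hom_ringI2 cring.axioms(1))
  show ?thesis
    using compactly_packed_surj_img compactly_packed_of_surj_nil_kernel assms by blast
qed

lemma RDirProd_simps:
  "(r, s) \<otimes>\<^bsub>RDirProd R S\<^esub> (r', s') = (r \<otimes>\<^bsub>R\<^esub> r', s \<otimes>\<^bsub>S\<^esub> s')"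
  "(r, s) \<oplus>\<^bsub>RDirProd R S\<^esub> (r', s') = (r \<oplus>\<^bsub>R\<^esub> r', s \<oplus>\<^bsub>S\<^esub> s')"
  "\<one>\<^bsub>RDirProd R S\<^esub> = (\<one>\<^bsub>R\<^esub>, \<one>\<^bsub>S\<^esub>)"
  by (simp_all add: RDirProd_def DirProd_def monoid.defs)

lemma RDirProd_a_inv:
  assumes "ring R" and "ring S" and "a \<in> carrier R" and "b \<in> carrier S"
  shows "\<ominus>\<^bsub>RDirProd R S\<^esub> (a, b) = (\<ominus>\<^bsub>R\<^esub> a, \<ominus>\<^bsub>S\<^esub> b)"
proof -
  interpret R: ring R by fact
  interpret S: ring S by fact
  show ?thesis
    using assms(3,4) unfolding a_inv_def RDirProd_add_monoid by simp
qed

lemma amalgamation_eq_RDirProd: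
  "amalgamation R S f J = (RDirProd R S)\<lparr>carrier := carrier (amalgamation R S f J)\<rparr>"
  by (simp add: amalgamation_def RDirProd_def DirProd_def monoid.defs)

lemma amalgamation_nat_pow:
  "x [^]\<^bsub>amalgamation R S f J\<^esub> (n::nat) = (fst x [^]\<^bsub>R\<^esub> n, snd x [^]\<^bsub>S\<^esub> n)"
  by (induction n) (auto simp: amalgamation_def case_prod_beta)

context
  fixes R :: "('a, 'c) ring_scheme" and S :: "('b, 'd) ring_scheme"
    and f :: "'a \<Rightarrow> 'b" and J :: "'b set"
  assumes R: "cring R" and S: "cring S" and f: "f \<in> ring_hom R S" and J: "ideal J S"
begin

interpretation R: cring R by (rule R)
interpretation S: cring S by (rule S)
interpretation J: ideal J S by (rule J)
interpretation f: ring_hom_ring R S f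
  using R S f by (simp add: ring_hom_ringI2 cring.axioms(1))
interpretation RS: ring "RDirProd R S"
  using RDirProd_ring R.ring_axioms S.ring_axioms .

lemma amalgamation_subcring: "subcring (carrier (amalgamation R S f J)) (RDirProd R S)"
proof (intro RS.subcringI RS.subringI)
  let ?A = "carrier (amalgamation R S f J)"
  have A_iff: "(r, s) \<in> ?A \<longleftrightarrow> r \<in> carrier R \<and> (\<exists>j\<in>J. s = f r \<oplus>\<^bsub>S\<^esub> j)" for r s
    by (auto simp: amalgamation_def)
  show "?A \<subseteq> carrier (RDirProd R S)"
    using J.Icarr by (auto simp: RDirProd_carrier amalgamation_def)
  show "\<one>\<^bsub>RDirProd R S\<^esub> \<in> ?A"
    unfolding RDirProd_simps A_iff by (auto intro!: bexI[of _ "\<zero>\<^bsub>S\<^esub>"])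
  fix x y assume x: "x \<in> ?A" and y: "y \<in> ?A"
  obtain r j where rj: "x = (r, f r \<oplus>\<^bsub>S\<^esub> j)" "r \<in> carrier R" "j \<in> J"
    using x by (auto simp: amalgamation_def)
  obtain r' j' where rj': "y = (r', f r' \<oplus>\<^bsub>S\<^esub> j')" "r' \<in> carrier R" "j' \<in> J"
    using y by (auto simp: amalgamation_def)
  have jc: "j \<in> carrier S" "j' \<in> carrier S" using rj rj' J.Icarr by auto
  show "\<ominus>\<^bsub>RDirProd R S\<^esub> x \<in> ?A"
  proof -
    have "\<ominus>\<^bsub>RDirProd R S\<^esub> x = (\<ominus>\<^bsub>R\<^esub> r, f (\<ominus>\<^bsub>R\<^esub> r) \<oplus>\<^bsub>S\<^esub> \<ominus>\<^bsub>S\<^esub> j)"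
      using rj jc by (simp add: RDirProd_a_inv R.ring_axioms S.ring_axioms S.minus_add)
    then show ?thesis
      using rj(2,3) J.a_inv_closed by (simp add: A_iff)
  qed
  show "x \<otimes>\<^bsub>RDirProd R S\<^esub> y \<in> ?A"
  proof -
    let ?k = "f r \<otimes>\<^bsub>S\<^esub> j' \<oplus>\<^bsub>S\<^esub> j \<otimes>\<^bsub>S\<^esub> f r' \<oplus>\<^bsub>S\<^esub> j \<otimes>\<^bsub>S\<^esub> j'"
    have "(f r \<oplus>\<^bsub>S\<^esub> j) \<otimes>\<^bsub>S\<^esub> (f r' \<oplus>\<^bsub>S\<^esub> j') = f (r \<otimes>\<^bsub>R\<^esub> r') \<oplus>\<^bsub>S\<^esub> ?k"
      using rj rj' jc by (simp add: S.l_distr S.r_distr S.a_ac)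
    moreover have "?k \<in> J" using rj rj' jc by (simp add: J.I_l_closed J.I_r_closed)
    ultimately show ?thesis using rj rj' by (auto simp: RDirProd_simps A_iff)
  qed
  show "x \<oplus>\<^bsub>RDirProd R S\<^esub> y \<in> ?A"
  proof -
    have "(f r \<oplus>\<^bsub>S\<^esub> j) \<oplus>\<^bsub>S\<^esub> (f r' \<oplus>\<^bsub>S\<^esub> j') = f (r \<oplus>\<^bsub>R\<^esub> r') \<oplus>\<^bsub>S\<^esub> (j \<oplus>\<^bsub>S\<^esub> j')"
      using rj rj' jc by (simp add: S.a_ac)
    then show ?thesis using rj rj' by (auto simp: RDirProd_simps A_iff)
  qed
  show "x \<otimes>\<^bsub>RDirProd R S\<^esub> y = y \<otimes>\<^bsub>RDirProd R S\<^esub> x"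
    using rj rj' jc by (simp add: RDirProd_simps R.m_comm S.m_comm)
qed

lemma amalgamation_cring: "cring (amalgamation R S f J)"
proof -
  have "carrier (amalgamation R S f J) \<subseteq> carrier (RDirProd R S)"
    using subcringE(1)[OF amalgamation_subcring] .
  then have "cring ((RDirProd R S)\<lparr>carrier := carrier (amalgamation R S f J)\<rparr>)"
    using amalgamation_subcring RS.subcring_iff by blast
  then show ?thesis by (subst amalgamation_eq_RDirProd)
qed

lemma amalgamation_fst_kernel:
  assumes "J \<subseteq> nilradical S"
  shows "a_kernel (amalgamation R S f J) R fst \<subseteq> nilradical (amalgamation R S f J)"
proof
  fix x assume "x \<in> a_kernel (amalgamation R S f J) R fst"
  then have x: "x \<in> carrier (amalgamation R S f J)" and "fst x = \<zero>\<^bsub>R\<^esub>"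
    unfolding a_kernel_def' by simp_all
  then obtain j where x_eq: "x = (\<zero>\<^bsub>R\<^esub>, j)" and j: "j \<in> J"
    using J.Icarr unfolding amalgamation_def by auto
  obtain n :: nat where "j [^]\<^bsub>S\<^esub> n = \<zero>\<^bsub>S\<^esub>"
    using assms j unfolding nilradical_def by blast
  then have "j [^]\<^bsub>S\<^esub> Suc n = \<zero>\<^bsub>S\<^esub>"
    using j J.Icarr by simp
  then have "x [^]\<^bsub>amalgamation R S f J\<^esub> Suc n = \<zero>\<^bsub>amalgamation R S f J\<^esub>"
    unfolding x_eq amalgamation_nat_pow by (simp add: amalgamation_def)
  with x show "x \<in> nilradical (amalgamation R S f J)"
    unfolding nilradical_def by blast
qed

lemma compactly_packed_amalgamation_iff:
  assumes "J \<subseteq> nilradical S"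
  shows "compactly_packed (amalgamation R S f J) \<longleftrightarrow> compactly_packed R"
proof (rule compactly_packed_iff_surj_nil_kernel
    [OF amalgamation_cring R _ _ amalgamation_fst_kernel[OF assms]])
  show "fst \<in> ring_hom (amalgamation R S f J) R"
  proof (rule ring_hom_memI)
    fix x y assume "x \<in> carrier (amalgamation R S f J)"
    then show "fst x \<in> carrier R" unfolding amalgamation_def by auto
    show "fst (x \<otimes>\<^bsub>amalgamation R S f J\<^esub> y) = fst x \<otimes>\<^bsub>R\<^esub> fst y"
      and "fst (x \<oplus>\<^bsub>amalgamation R S f J\<^esub> y) = fst x \<oplus>\<^bsub>R\<^esub> fst y"
      by (simp_all add: amalgamation_def case_prod_beta)
  qed (simp add: amalgamation_def)
  show "fst ` carrier (amalgamation R S f J) = carrier R"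
  proof
    show "fst ` carrier (amalgamation R S f J) \<subseteq> carrier R"
      unfolding amalgamation_def by auto
    show "carrier R \<subseteq> fst ` carrier (amalgamation R S f J)"
    proof
      fix r assume "r \<in> carrier R"
      then have "(r, f r \<oplus>\<^bsub>S\<^esub> \<zero>\<^bsub>S\<^esub>) \<in> carrier (amalgamation R S f J)"
        unfolding amalgamation_def using J.zero_closed by (auto intro!: exI[of _ "\<zero>\<^bsub>S\<^esub>"])
      then show "r \<in> fst ` carrier (amalgamation R S f J)"
        by (metis fst_conv imageI)
    qed
  qed
qed

end

lemma trivial_extension_simps [simp]:
  "carrier (trivial_extension R M) = carrier R \<times> carrier M"
  "(r, m) \<otimes>\<^bsub>trivial_extension R M\<^esub> (r', m') = (r \<otimes>\<^bsub>R\<^esub> r', r \<odot>\<^bsub>M\<^esub> m' \<oplus>\<^bsub>M\<^esub> r' \<odot>\<^bsub>M\<^esub> m)"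
  "(r, m) \<oplus>\<^bsub>trivial_extension R M\<^esub> (r', m') = (r \<oplus>\<^bsub>R\<^esub> r', m \<oplus>\<^bsub>M\<^esub> m')"
  "\<one>\<^bsub>trivial_extension R M\<^esub> = (\<one>\<^bsub>R\<^esub>, \<zero>\<^bsub>M\<^esub>)"
  "\<zero>\<^bsub>trivial_extension R M\<^esub> = (\<zero>\<^bsub>R\<^esub>, \<zero>\<^bsub>M\<^esub>)"
  by (simp_all add: trivial_extension_def)

context
  fixes R :: "('a, 'c) ring_scheme" and M :: "('a, 'e, 'g) module_scheme"
  assumes M: "module R M"
begin

interpretation module R M by (rule M)

lemma trivial_extension_cring: "cring (trivial_extension R M)"
proof (rule cringI)
  show "abelian_group (trivial_extension R M)"
  proof (rule abelian_groupI)
    fix x y z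
    assume x: "x \<in> carrier (trivial_extension R M)" and "y \<in> carrier (trivial_extension R M)"
      and "z \<in> carrier (trivial_extension R M)"
    then show "x \<oplus>\<^bsub>trivial_extension R M\<^esub> y \<in> carrier (trivial_extension R M)"
      and "x \<oplus>\<^bsub>trivial_extension R M\<^esub> y \<oplus>\<^bsub>trivial_extension R M\<^esub> z
             = x \<oplus>\<^bsub>trivial_extension R M\<^esub> (y \<oplus>\<^bsub>trivial_extension R M\<^esub> z)"
      and "x \<oplus>\<^bsub>trivial_extension R M\<^esub> y = y \<oplus>\<^bsub>trivial_extension R M\<^esub> x"
      and "\<zero>\<^bsub>trivial_extension R M\<^esub> \<oplus>\<^bsub>trivial_extension R M\<^esub> x = x"
      by (auto simp: R.a_ac M.a_ac)
    show "\<exists>y\<in>carrier (trivial_extension R M).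
            y \<oplus>\<^bsub>trivial_extension R M\<^esub> x = \<zero>\<^bsub>trivial_extension R M\<^esub>"
      using x
      by (auto intro!: bexI[of _ "(\<ominus>\<^bsub>R\<^esub> fst x, \<ominus>\<^bsub>M\<^esub> snd x)"] simp: R.l_neg M.l_neg)
  qed simp
next
  show "comm_monoid (trivial_extension R M)"
  proof (rule comm_monoidI)
    fix x y z
    assume "x \<in> carrier (trivial_extension R M)" "y \<in> carrier (trivial_extension R M)"
      "z \<in> carrier (trivial_extension R M)"
    then obtain a m b n c k where xyz: "x = (a, m)" "y = (b, n)" "z = (c, k)"
      "a \<in> carrier R" "b \<in> carrier R" "c \<in> carrier R"
      "m \<in> carrier M" "n \<in> carrier M" "k \<in> carrier M"
      by auto
    then show "x \<otimes>\<^bsub>trivial_extension R M\<^esub> y \<in> carrier (trivial_extension R M)"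
      and "\<one>\<^bsub>trivial_extension R M\<^esub> \<otimes>\<^bsub>trivial_extension R M\<^esub> x = x"
      and "x \<otimes>\<^bsub>trivial_extension R M\<^esub> y = y \<otimes>\<^bsub>trivial_extension R M\<^esub> x"
      by (simp_all add: R.m_comm M.a_comm)
    show "x \<otimes>\<^bsub>trivial_extension R M\<^esub> y \<otimes>\<^bsub>trivial_extension R M\<^esub> z
            = x \<otimes>\<^bsub>trivial_extension R M\<^esub> (y \<otimes>\<^bsub>trivial_extension R M\<^esub> z)"
      using xyz by (simp add: R.m_assoc smult_r_distr smult_assoc1 M.a_ac,
                    simp add: R.m_comm smult_assoc1[symmetric])
  qed simp
next
  fix x y z
  assume "x \<in> carrier (trivial_extension R M)" "y \<in> carrier (trivial_extension R M)"
    "z \<in> carrier (trivial_extension R M)"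
  then show "(x \<oplus>\<^bsub>trivial_extension R M\<^esub> y) \<otimes>\<^bsub>trivial_extension R M\<^esub> z
               = x \<otimes>\<^bsub>trivial_extension R M\<^esub> z
                 \<oplus>\<^bsub>trivial_extension R M\<^esub> y \<otimes>\<^bsub>trivial_extension R M\<^esub> z"
    by (auto simp: R.l_distr smult_l_distr smult_r_distr M.a_ac)
qed

lemma trivial_extension_fst_kernel:
  "a_kernel (trivial_extension R M) R fst \<subseteq> nilradical (trivial_extension R M)"
proof
  fix x assume "x \<in> a_kernel (trivial_extension R M) R fst"
  then obtain m where x: "x = (\<zero>\<^bsub>R\<^esub>, m)" "m \<in> carrier M"
    by (auto simp: a_kernel_def')
  then have "x [^]\<^bsub>trivial_extension R M\<^esub> (2::nat) = \<zero>\<^bsub>trivial_extension R M\<^esub>"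
    by (simp add: numeral_2_eq_2)
  with x show "x \<in> nilradical (trivial_extension R M)"
    unfolding nilradical_def by auto
qed

lemma compactly_packed_trivial_extension_iff:
  "compactly_packed (trivial_extension R M) \<longleftrightarrow> compactly_packed R"
proof (rule compactly_packed_iff_surj_nil_kernel
    [OF trivial_extension_cring R.is_cring _ _ trivial_extension_fst_kernel])
  show "fst \<in> ring_hom (trivial_extension R M) R"
    by (rule ring_hom_memI) auto
  show "fst ` carrier (trivial_extension R M) = carrier R"
    by (auto intro!: image_eqI[where x="(r, \<zero>\<^bsub>M\<^esub>)" for r])
qed

end

theorem corollary4p4:
  fixes R :: "('a, 'c) ring_scheme" and S :: "('b, 'd) ring_scheme"
    and f :: "'a \<Rightarrow> 'b" and J :: "'b set"
  assumes "cring R" and "cring S" and "f \<in> ring_hom R S"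
    and "ideal J S" and "J \<noteq> {\<zero>\<^bsub>S\<^esub>}" and "J \<noteq> carrier S"
  shows "(J \<subseteq> nilradical S \<longrightarrow>
            (compactly_packed (amalgamation R S f J) \<longleftrightarrow> compactly_packed R))
       \<and> (\<forall>M :: ('a, 'e, 'g) module_scheme. module R M \<longrightarrow>
            (compactly_packed (trivial_extension R M) \<longleftrightarrow> compactly_packed R))"
  using compactly_packed_amalgamation_iff[OF assms(1-4)] compactly_packed_trivial_extension_iff
  by blast

end
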